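(* Let $R=\mathbb{F}_q+v\mathbb{F}_q+v^2\mathbb{F}_q$ with $v^3=v$, let $C$ be a linear code of length $n$ over $R$ and $C^\perp$ its dual. Then $\Psi(C)^\perp=\Psi(C^\perp)$, where $\Psi(C)^\perp$ is the dual of $\Psi(C)$ in $\mathbb{F}_q^{3n}$ with respect to the standard inner product. Moreover, if $C$ is self-dual, then $\Psi(C)$ is self-dual.
   Context: $q$ is a prime power and $R=\mathbb{F}_q[v]/\langle v^3-v\rangle$; every element of $R$ is uniquely $a_0+va_1+v^2a_2$ with $a_i\in\mathbb{F}_q$. A linear code of length $n$ over $R$ is an $R$-submodule of $R^n$. The Euclidean inner product on $R^n$ is $x\cdot y=\sum_{i=0}^{n-1}x_iy_i$; $C^\perp=\{x\in R^n: x\cdot y=0\ \forall y\in C\}$, and $C$ is self-dual if $C=C^\perp$. Every $c\in R^n$ can be written uniquely as $c=a_0+va_1+v^2a_2$ with $a_0,a_1,a_2\in\mathbb{F}_q^n$, and the Gray map $\Psi:R^n\to\mathbb{F}_q^{3n}$ is $\Psi(c)=(a_0,\ a_0+a_2,\ a_1)$. *)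

theory Defs
  imports Main
begin

text \<open>The ring R = F_q[v]/(v^3 - v).  An element a0 + v a1 + v^2 a2 is represented
  by the triple (a0, a1, a2) over a finite field 'a (= F_q).\<close>

type_synonym 'a R = "'a \<times> 'a \<times> 'a"

definition R_zero :: "'a::field R" where
  "R_zero = (0, 0, 0)"

definition R_add :: "'a::field R \<Rightarrow> 'a R \<Rightarrow> 'a R" where
  "R_add x y = (case x of (a0, a1, a2) \<Rightarrow> case y of (b0, b1, b2) \<Rightarrow>
      (a0 + b0, a1 + b1, a2 + b2))"

text \<open>Multiplication using v^3 = v (hence v^4 = v^2).\<close>
definition R_mul :: "'a::field R \<Rightarrow> 'a R \<Rightarrow> 'a R" where
  "R_mul x y = (case x of (a0, a1, a2) \<Rightarrow> case y of (b0, b1, b2) \<Rightarrow>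
      (a0 * b0,
       a0 * b1 + a1 * b0 + a1 * b2 + a2 * b1,
       a0 * b2 + a1 * b1 + a2 * b0 + a2 * b2))"

text \<open>Vectors of length n are functions nat => _ vanishing from index n on.\<close>
definition Rvecs :: "nat \<Rightarrow> (nat \<Rightarrow> 'a::field R) set" where
  "Rvecs n = {x. \<forall>i\<ge>n. x i = R_zero}"

definition Fvecs :: "nat \<Rightarrow> (nat \<Rightarrow> 'a::field) set" where
  "Fvecs m = {x. \<forall>i\<ge>m. x i = 0}"

definition R_linear_code :: "nat \<Rightarrow> (nat \<Rightarrow> 'a::field R) set \<Rightarrow> bool" where
  "R_linear_code n C \<longleftrightarrow> C \<subseteq> Rvecs n \<and> (\<lambda>i. R_zero) \<in> C
     \<and> (\<forall>x\<in>C. \<forall>y\<in>C. (\<lambda>i. R_add (x i) (y i)) \<in> C)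
     \<and> (\<forall>r. \<forall>x\<in>C. (\<lambda>i. R_mul r (x i)) \<in> C)"

fun R_sum :: "nat \<Rightarrow> (nat \<Rightarrow> 'a::field R) \<Rightarrow> 'a R" where
  "R_sum 0 f = R_zero"
| "R_sum (Suc k) f = R_add (R_sum k f) (f k)"

definition R_inner :: "nat \<Rightarrow> (nat \<Rightarrow> 'a::field R) \<Rightarrow> (nat \<Rightarrow> 'a R) \<Rightarrow> 'a R" where
  "R_inner n x y = R_sum n (\<lambda>i. R_mul (x i) (y i))"

definition R_dual :: "nat \<Rightarrow> (nat \<Rightarrow> 'a::field R) set \<Rightarrow> (nat \<Rightarrow> 'a R) set" where
  "R_dual n C = {x \<in> Rvecs n. \<forall>y\<in>C. R_inner n x y = R_zero}"

definition F_dual :: "nat \<Rightarrow> (nat \<Rightarrow> 'a::field) set \<Rightarrow> (nat \<Rightarrow> 'a) set" where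
  "F_dual m D = {x \<in> Fvecs m. \<forall>y\<in>D. (\<Sum>i<m. x i * y i) = 0}"

definition Psi :: "nat \<Rightarrow> (nat \<Rightarrow> 'a::field R) \<Rightarrow> (nat \<Rightarrow> 'a)" where
  "Psi n c = (\<lambda>j. if j < n then fst (c j)
                 else if j < 2 * n then fst (c (j - n)) + snd (snd (c (j - n)))
                 else if j < 3 * n then fst (snd (c (j - 2 * n)))
                 else 0)"

end

theory Submission
  imports Defs
begin

text \<open>The Gray map turns the Euclidean inner product on R^n into the linear functional
  \<open>gray_trace (a0, a1, a2) = 2 a0 + a2\<close> of the R-valued inner product:
  \<open>\<Psi> x \<cdot> \<Psi> y = gray_trace (x \<cdot> y)\<close>.  This functional is nondegenerate in the sense that
  \<open>gray_trace (r s) = 0\<close> for all \<open>r \<in> R\<close> forces \<open>s = 0\<close>.  Hence for a code closed under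
  R-scaling, \<open>\<Psi> z\<close> is orthogonal to \<open>\<Psi>(C)\<close> iff \<open>z\<close> is orthogonal to \<open>C\<close>; together with
  surjectivity of \<open>\<Psi>\<close> onto F_q^{3n} this gives \<open>\<Psi>(C)\<^sup>\<perp> = \<Psi>(C\<^sup>\<perp>)\<close>.\<close>

lemma R_sum_eq:
  "R_sum k f = ((\<Sum>i<k. fst (f i)), (\<Sum>i<k. fst (snd (f i))), (\<Sum>i<k. snd (snd (f i))))"
  by (induction k) (auto simp: R_zero_def R_add_def split: prod.splits)

lemma R_mul_eq:
  "R_mul a b = (fst a * fst b,
     fst a * fst (snd b) + fst (snd a) * fst b + fst (snd a) * snd (snd b) + snd (snd a) * fst (snd b),
     fst a * snd (snd b) + fst (snd a) * fst (snd b) + snd (snd a) * fst b + snd (snd a) * snd (snd b))"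
  by (cases a; cases b) (simp add: R_mul_def)

lemma R_inner_scale_right:
  "R_inner n x (\<lambda>i. R_mul r (y i)) = R_mul r (R_inner n x y)"
  unfolding R_inner_def R_sum_eq R_mul_eq
  by (simp add: sum.distrib sum_distrib_left algebra_simps)

lemma sum_lessThan_three_blocks:
  fixes f :: "nat \<Rightarrow> 'a::comm_monoid_add"
  shows "(\<Sum>j<3 * n. f j) = (\<Sum>i<n. f i + f (i + n) + f (i + 2 * n))"
proof -
  have "(\<Sum>j<3 * n. f j) = sum f {0..<n} + sum f {n..<2 * n} + sum f {2 * n..<3 * n}"
    by (simp add: lessThan_atLeast0 sum.atLeastLessThan_concat)
  moreover have "sum f {n..<2 * n} = (\<Sum>i<n. f (i + n))"
    using sum.shift_bounds_nat_ivl[of f 0 n n] by (simp add: lessThan_atLeast0 mult_2)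
  moreover have "sum f {2 * n..<3 * n} = (\<Sum>i<n. f (i + 2 * n))"
    using sum.shift_bounds_nat_ivl[of f 0 "2 * n" n] by (simp add: lessThan_atLeast0 algebra_simps)
  ultimately show ?thesis
    by (simp add: lessThan_atLeast0 sum.distrib)
qed

definition gray_trace :: "'a::field R \<Rightarrow> 'a" where
  "gray_trace s = 2 * fst s + snd (snd s)"

lemma gray_trace_zero [simp]: "gray_trace R_zero = 0"
  by (simp add: gray_trace_def R_zero_def)

lemma gray_trace_nondegenerate:
  fixes s :: "'a::field R"
  assumes "\<And>r. gray_trace (R_mul r s) = 0"
  shows "s = R_zero"
proof -
  obtain a b c where s: "s = (a, b, c)" by (cases s) auto
  have "2 * a + c = 0" "b = 0" "a + c = 0"
    using assms[of "(1, 0, 0)"] assms[of "(0, 1, 0)"] assms[of "(0, 0, 1)"]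
    by (auto simp: s gray_trace_def R_mul_def)
  moreover have "a = (2 * a + c) - (a + c)" by algebra
  ultimately show ?thesis
    by (simp add: s R_zero_def)
qed

lemma Psi_blocks:
  assumes "i < n"
  shows "Psi n x i = fst (x i)"
    and "Psi n x (i + n) = fst (x i) + snd (snd (x i))"
    and "Psi n x (i + 2 * n) = fst (snd (x i))"
  using assms by (simp_all add: Psi_def)

lemma Psi_in_Fvecs: "Psi n x \<in> Fvecs (3 * n)"
  by (simp add: Psi_def Fvecs_def)

lemma inner_Psi_eq_gray_trace:
  fixes x y :: "nat \<Rightarrow> 'a::field R"
  shows "(\<Sum>j<3 * n. Psi n x j * Psi n y j) = gray_trace (R_inner n x y)"
proof -
  have "(\<Sum>j<3 * n. Psi n x j * Psi n y j) =
     (\<Sum>i<n. 2 * (fst (x i) * fst (y i)) +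
       (fst (x i) * snd (snd (y i)) + fst (snd (x i)) * fst (snd (y i))
        + snd (snd (x i)) * fst (y i) + snd (snd (x i)) * snd (snd (y i))))"
    unfolding sum_lessThan_three_blocks
    by (rule sum.cong) (simp_all add: Psi_blocks, algebra)
  also have "\<dots> = gray_trace (R_inner n x y)"
    unfolding gray_trace_def R_inner_def R_sum_eq R_mul_eq
    by (simp add: sum.distrib sum_distrib_left)
  finally show ?thesis .
qed

lemma Psi_onto_Fvecs:
  assumes "z \<in> Fvecs (3 * n)"
  obtains x where "x \<in> Rvecs n" "Psi n x = z"
proof
  define x where "x = (\<lambda>i. if i < n then (z i, z (i + 2 * n), z (i + n) - z i) else R_zero)"
  show "x \<in> Rvecs n"
    by (simp add: Rvecs_def x_def)
  show "Psi n x = z"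
  proof
    fix j
    show "Psi n x j = z j"
      using assms by (cases "j < 3 * n") (auto simp: Psi_def x_def Fvecs_def)
  qed
qed

lemma F_dual_Psi_image:
  fixes C :: "(nat \<Rightarrow> 'a::field R) set"
  assumes scale_closed: "\<And>r y. y \<in> C \<Longrightarrow> (\<lambda>i. R_mul r (y i)) \<in> C"
  shows "F_dual (3 * n) (Psi n ` C) = Psi n ` R_dual n C"
proof
  show "Psi n ` R_dual n C \<subseteq> F_dual (3 * n) (Psi n ` C)"
    by (auto simp: F_dual_def R_dual_def Psi_in_Fvecs inner_Psi_eq_gray_trace)
next
  show "F_dual (3 * n) (Psi n ` C) \<subseteq> Psi n ` R_dual n C"
  proof
    fix z assume z: "z \<in> F_dual (3 * n) (Psi n ` C)"
    then obtain x where x: "x \<in> Rvecs n" and z_eq: "Psi n x = z"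
      using Psi_onto_Fvecs by (auto simp: F_dual_def)
    have "R_inner n x y = R_zero" if "y \<in> C" for y
    proof (rule gray_trace_nondegenerate)
      fix r
      have "(\<Sum>i<3 * n. z i * Psi n (\<lambda>i. R_mul r (y i)) i) = 0"
        using z scale_closed[OF \<open>y \<in> C\<close>] by (auto simp: F_dual_def)
      then show "gray_trace (R_mul r (R_inner n x y)) = 0"
        by (simp add: z_eq [symmetric] inner_Psi_eq_gray_trace R_inner_scale_right)
    qed
    with x z_eq show "z \<in> Psi n ` R_dual n C"
      by (auto simp: R_dual_def)
  qed
qed

theorem theorem6:
  fixes C :: "(nat \<Rightarrow> ('a::{field, finite}) R) set" and n :: nat
  assumes "R_linear_code n C"
  shows "F_dual (3 * n) (Psi n ` C) = Psi n ` R_dual n C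
         \<and> (R_dual n C = C \<longrightarrow> F_dual (3 * n) (Psi n ` C) = Psi n ` C)"
proof -
  have "\<And>r y. y \<in> C \<Longrightarrow> (\<lambda>i. R_mul r (y i)) \<in> C"
    using assms unfolding R_linear_code_def by blast
  then have "F_dual (3 * n) (Psi n ` C) = Psi n ` R_dual n C"
    by (rule F_dual_Psi_image)
  then show ?thesis by simp
qed

end
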